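(* Let $\boldsymbol{\xi}^1,\dots,\boldsymbol{\xi}^K\in\mathcal X=[0,1/\sqrt{D}]^D$, $\beta>0$, and $E(\mathbf{x}) = -\frac{1}{\beta}\log\Big(\sum_{\mu=1}^K \exp\big(-\tfrac{\beta}{2}\|\boldsymbol{\xi}^\mu-\mathbf{x}\|_2^2\big)\Big).$ Then for all $\mathbf{x},\mathbf{z}\in\mathcal X$, $\|\nabla_{\mathbf{x}}E(\mathbf{x})-\nabla_{\mathbf{x}}E(\mathbf{z})\|_2\le(1+2K\beta e^{\beta/2})\|\mathbf{x}-\mathbf{z}\|_2.$
   Context: Here $\nabla_{\mathbf{x}}E(\mathbf{x}) = \mathbf{x}-\sum_{\mu=1}^K \frac{\exp(-\frac{\beta}{2}\|\mathbf{x}-\boldsymbol{\xi}^\mu\|_2^2)}{\sum_{\nu=1}^K\exp(-\frac{\beta}{2}\|\mathbf{x}-\boldsymbol{\xi}^\nu\|_2^2)}\boldsymbol{\xi}^\mu$ is the gradient of $E$. *)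

theory Defs
  imports "HOL-Analysis.Analysis"
begin

definition hcube :: "(real ^ 'n) set" where
  "hcube = {x. \<forall>i. 0 \<le> x $ i \<and> x $ i \<le> 1 / sqrt (real CARD('n))}"

definition energy :: "real \<Rightarrow> nat \<Rightarrow> (nat \<Rightarrow> real ^ 'n) \<Rightarrow> real ^ 'n \<Rightarrow> real" where
  "energy \<beta> K \<xi> x = - (1 / \<beta>) * ln (\<Sum>\<mu>=1..K. exp (- (\<beta> / 2) * (norm (\<xi> \<mu> - x))\<^sup>2))"

text \<open>The gradient of E, exactly as given in the paper:
  x - sum_mu softmax_mu(x) xi^mu.\<close>
definition gradE :: "real \<Rightarrow> nat \<Rightarrow> (nat \<Rightarrow> real ^ 'n) \<Rightarrow> real ^ 'n \<Rightarrow> real ^ 'n" where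
  "gradE \<beta> K \<xi> x = x - (\<Sum>\<mu>=1..K.
      (exp (- (\<beta> / 2) * (norm (x - \<xi> \<mu>))\<^sup>2)
        / (\<Sum>\<nu>=1..K. exp (- (\<beta> / 2) * (norm (x - \<xi> \<nu>))\<^sup>2))) *\<^sub>R \<xi> \<mu>)"

end

theory Submission
  imports Defs
begin

text \<open>
  The gradient is \<open>x\<close> minus a convex combination of the patterns, each of norm at most 1, so it
  suffices to bound the \<open>\<ell>\<^sub>1\<close> variation of the softmax weights. The hypercube has diameter 1,
  hence every Gaussian weight \<open>exp (-\<beta>/2 \<parallel>x - \<xi>\<^sup>\<mu>\<parallel>\<^sup>2)\<close> is at least \<open>exp (-\<beta>/2)\<close> and, as \<open>exp\<close> is
  1-Lipschitz on the nonpositive reals, \<open>\<beta>\<close>-Lipschitz in \<open>x\<close>. Normalising weights that are bounded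
  below by \<open>m\<close> and move by at most \<open>L\<close> changes the convex combination by at most \<open>2L/m\<close>. This
  gives the constant \<open>1 + 2 \<beta> exp (\<beta>/2)\<close>; the extra factor \<open>K\<close> in the claim is slack.
\<close>

lemma hcube_diameter_le_one:
  assumes "x \<in> hcube" "y \<in> hcube"
  shows "norm (x - y :: real ^ 'n) \<le> 1"
proof -
  let ?c = "1 / sqrt (real CARD('n))"
  have "(x $ i - y $ i)\<^sup>2 \<le> ?c\<^sup>2" for i
  proof -
    have "0 \<le> x $ i" "x $ i \<le> ?c" "0 \<le> y $ i" "y $ i \<le> ?c"
      using assms unfolding hcube_def by auto
    then have "\<bar>x $ i - y $ i\<bar> \<le> ?c"
      by linarith
    then show ?thesis
      by (metis abs_ge_zero power2_abs power_mono)
  qed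
  then have "(\<Sum>i\<in>UNIV. (x $ i - y $ i)\<^sup>2) \<le> (\<Sum>i\<in>(UNIV :: 'n set). ?c\<^sup>2)"
    by (rule sum_mono)
  also have "\<dots> = 1"
    by (simp add: power_divide)
  finally have "(norm (x - y))\<^sup>2 \<le> 1"
    by (simp add: norm_vec_def L2_set_def sum_nonneg)
  then show ?thesis
    by (simp add: power_le_one_iff)
qed

lemma abs_exp_diff_le_nonpos:
  fixes u v :: real
  assumes "u \<le> 0" "v \<le> 0"
  shows "\<bar>exp u - exp v\<bar> \<le> \<bar>u - v\<bar>"
proof -
  have exp_diff_le: "exp u - exp v \<le> u - v" if "u \<le> 0" "v \<le> u" for u v :: real
  proof -
    have "exp u - exp v = exp u * (1 - exp (v - u))"
      by (simp add: exp_diff field_simps)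
    also have "\<dots> \<le> 1 * (u - v)"
    proof (rule mult_mono)
      show "1 - exp (v - u) \<le> u - v"
        using exp_ge_add_one_self[of "v - u"] by linarith
    qed (use that in auto)
    finally show ?thesis
      by simp
  qed
  show ?thesis
    using exp_diff_le[of u v] exp_diff_le[of v u] assms by (cases "v \<le> u") auto
qed

definition gauss_weight :: "real \<Rightarrow> 'a :: real_normed_vector \<Rightarrow> 'a \<Rightarrow> real" where
  "gauss_weight \<beta> y x = exp (- (\<beta> / 2) * (norm (x - y))\<^sup>2)"

lemma gauss_weight_pos: "gauss_weight \<beta> y x > 0"
  by (simp add: gauss_weight_def)

lemma gauss_weight_lower_bound:
  assumes "\<beta> \<ge> 0" "norm (x - y) \<le> 1"
  shows "exp (- (\<beta> / 2)) \<le> gauss_weight \<beta> y x"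
  using assms by (simp add: gauss_weight_def mult_left_le power_le_one)

lemma gauss_weight_lipschitz:
  fixes x y z :: "'a :: real_normed_vector"
  assumes "\<beta> \<ge> 0" "norm (x - y) \<le> 1" "norm (z - y) \<le> 1"
  shows "\<bar>gauss_weight \<beta> y x - gauss_weight \<beta> y z\<bar> \<le> \<beta> * norm (x - z)"
proof -
  let ?p = "norm (x - y)" and ?q = "norm (z - y)"
  have "\<bar>?p - ?q\<bar> \<le> norm (x - z)"
    using norm_triangle_ineq3[of "x - y" "z - y"] by simp
  have "\<bar>?p\<^sup>2 - ?q\<^sup>2\<bar> = \<bar>?p - ?q\<bar> * (?p + ?q)"
    unfolding power2_eq_square square_diff_square_factored abs_mult by simp
  also have "\<dots> \<le> norm (x - z) * 2"
    using \<open>\<bar>?p - ?q\<bar> \<le> norm (x - z)\<close> assms by (intro mult_mono) auto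
  finally have diff_squares: "\<bar>?p\<^sup>2 - ?q\<^sup>2\<bar> \<le> norm (x - z) * 2" .
  have "\<bar>exp (- (\<beta> / 2) * ?p\<^sup>2) - exp (- (\<beta> / 2) * ?q\<^sup>2)\<bar>
          \<le> \<bar>- (\<beta> / 2) * ?p\<^sup>2 - - (\<beta> / 2) * ?q\<^sup>2\<bar>"
    using assms by (intro abs_exp_diff_le_nonpos) auto
  also have "\<dots> = \<beta> / 2 * \<bar>?p\<^sup>2 - ?q\<^sup>2\<bar>"
  proof -
    have "- (\<beta> / 2) * ?p\<^sup>2 - - (\<beta> / 2) * ?q\<^sup>2 = - (\<beta> / 2 * (?p\<^sup>2 - ?q\<^sup>2))"
      by (simp add: algebra_simps)
    then show ?thesis
      using assms by (simp add: abs_mult)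
  qed
  also have "\<dots> \<le> \<beta> / 2 * (norm (x - z) * 2)"
    using diff_squares assms by (intro mult_left_mono) auto
  finally show ?thesis
    by (simp add: gauss_weight_def)
qed

lemma norm_normalized_weights_diff_le:
  fixes v :: "'i \<Rightarrow> 'a :: real_normed_vector"
  assumes "finite I" "sum a I > 0" "sum b I > 0" "\<forall>i\<in>I. b i \<ge> 0" "\<forall>i\<in>I. norm (v i) \<le> 1"
  shows "norm (\<Sum>i\<in>I. (a i / sum a I - b i / sum b I) *\<^sub>R v i)
           \<le> 2 * (\<Sum>i\<in>I. \<bar>a i - b i\<bar>) / sum a I"
proof -
  let ?A = "sum a I" and ?B = "sum b I"
  have weight_diff: "\<bar>a i / ?A - b i / ?B\<bar> \<le> \<bar>a i - b i\<bar> / ?A + b i * \<bar>?B - ?A\<bar> / (?A * ?B)"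
    if "i \<in> I" for i
  proof -
    have "a i / ?A - b i / ?B = (a i - b i) / ?A + b i * (?B - ?A) / (?A * ?B)"
      using assms by (simp add: field_simps)
    also have "\<bar>\<dots>\<bar> \<le> \<bar>(a i - b i) / ?A\<bar> + \<bar>b i * (?B - ?A) / (?A * ?B)\<bar>"
      by (rule abs_triangle_ineq)
    also have "\<dots> = \<bar>a i - b i\<bar> / ?A + b i * \<bar>?B - ?A\<bar> / (?A * ?B)"
      using assms that by (simp add: abs_mult abs_divide)
    finally show ?thesis .
  qed
  have "norm (\<Sum>i\<in>I. (a i / ?A - b i / ?B) *\<^sub>R v i) \<le> (\<Sum>i\<in>I. \<bar>a i / ?A - b i / ?B\<bar>)"
    using assms by (intro order.trans[OF norm_sum] sum_mono) (simp add: mult_left_le)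
  also have "\<dots> \<le> (\<Sum>i\<in>I. \<bar>a i - b i\<bar> / ?A + b i * \<bar>?B - ?A\<bar> / (?A * ?B))"
    using weight_diff by (rule sum_mono)
  also have "\<dots> = ((\<Sum>i\<in>I. \<bar>a i - b i\<bar>) + \<bar>?B - ?A\<bar>) / ?A"
  proof -
    have "(\<Sum>i\<in>I. \<bar>a i - b i\<bar> / ?A + b i * \<bar>?B - ?A\<bar> / (?A * ?B))
            = (\<Sum>i\<in>I. \<bar>a i - b i\<bar>) / ?A + ?B * \<bar>?B - ?A\<bar> / (?A * ?B)"
      by (simp add: sum.distrib flip: sum_divide_distrib sum_distrib_right)
    then show ?thesis
      using assms by (simp add: field_simps)
  qed
  also have "\<dots> \<le> 2 * (\<Sum>i\<in>I. \<bar>a i - b i\<bar>) / ?A"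
  proof -
    have "\<bar>?B - ?A\<bar> \<le> (\<Sum>i\<in>I. \<bar>a i - b i\<bar>)"
      using sum_abs[of "\<lambda>i. a i - b i" I] by (simp add: sum_subtractf)
    then show ?thesis
      using assms by (simp add: divide_right_mono)
  qed
  finally show ?thesis .
qed

lemma norm_normalized_weights_diff_le_uniform:
  fixes v :: "'i \<Rightarrow> 'a :: real_normed_vector"
  assumes "finite I" "I \<noteq> {}" "m > 0"
    and "\<forall>i\<in>I. a i \<ge> m" "\<forall>i\<in>I. b i > 0" "\<forall>i\<in>I. \<bar>a i - b i\<bar> \<le> L"
    and "\<forall>i\<in>I. norm (v i) \<le> 1"
  shows "norm (\<Sum>i\<in>I. (a i / sum a I - b i / sum b I) *\<^sub>R v i) \<le> 2 * L / m"
proof -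
  have card_pos: "real (card I) > 0"
    using assms(1,2) by (simp add: card_gt_0_iff)
  have L_nonneg: "L \<ge> 0"
    using assms(2,6) by (meson abs_ge_zero all_not_in_conv order.trans)
  have sum_a_ge: "sum a I \<ge> card I * m"
    using sum_mono[of I "\<lambda>_. m" a] assms(4) by simp
  have "sum a I > 0"
    using card_pos assms(3) sum_a_ge by (meson mult_pos_pos order.strict_trans2)
  moreover have "sum b I > 0"
    using assms(1,2,5) by (intro sum_pos) auto
  ultimately have "norm (\<Sum>i\<in>I. (a i / sum a I - b i / sum b I) *\<^sub>R v i)
               \<le> 2 * (\<Sum>i\<in>I. \<bar>a i - b i\<bar>) / sum a I"
    using assms by (intro norm_normalized_weights_diff_le) auto
  also have "\<dots> \<le> 2 * (card I * L) / (card I * m)"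
  proof (intro frac_le)
    show "2 * (\<Sum>i\<in>I. \<bar>a i - b i\<bar>) \<le> 2 * (card I * L)"
      using sum_mono[of I "\<lambda>i. \<bar>a i - b i\<bar>" "\<lambda>_. L"] assms(6) by simp
  qed (use card_pos assms(3) L_nonneg sum_a_ge in auto)
  also have "\<dots> = 2 * L / m"
    using card_pos by simp
  finally show ?thesis .
qed

lemma gradE_eq_gauss_weight:
  "gradE \<beta> K \<xi> x
     = x - (\<Sum>\<mu>=1..K. (gauss_weight \<beta> (\<xi> \<mu>) x / (\<Sum>\<nu>=1..K. gauss_weight \<beta> (\<xi> \<nu>) x)) *\<^sub>R \<xi> \<mu>)"
  by (simp add: gradE_def gauss_weight_def)

lemma norm_gauss_softmax_diff_le:
  fixes \<xi> :: "'i \<Rightarrow> real ^ 'n"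
  assumes "finite I" "I \<noteq> {}" "\<forall>\<mu>\<in>I. \<xi> \<mu> \<in> hcube" "\<beta> \<ge> 0" "x \<in> hcube" "z \<in> hcube"
  shows "norm (\<Sum>\<mu>\<in>I. (gauss_weight \<beta> (\<xi> \<mu>) x / (\<Sum>\<nu>\<in>I. gauss_weight \<beta> (\<xi> \<nu>) x)
                      - gauss_weight \<beta> (\<xi> \<mu>) z / (\<Sum>\<nu>\<in>I. gauss_weight \<beta> (\<xi> \<nu>) z)) *\<^sub>R \<xi> \<mu>)
           \<le> 2 * \<beta> * exp (\<beta> / 2) * norm (x - z)"
proof -
  have "0 \<in> hcube"
    by (simp add: hcube_def)
  then have near: "norm (p - \<xi> \<mu>) \<le> 1" "norm (\<xi> \<mu>) \<le> 1" if "p \<in> hcube" "\<mu> \<in> I" for p \<mu>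
    using hcube_diameter_le_one assms(3) that by (metis diff_zero)+
  have "norm (\<Sum>\<mu>\<in>I. (gauss_weight \<beta> (\<xi> \<mu>) x / (\<Sum>\<nu>\<in>I. gauss_weight \<beta> (\<xi> \<nu>) x)
                      - gauss_weight \<beta> (\<xi> \<mu>) z / (\<Sum>\<nu>\<in>I. gauss_weight \<beta> (\<xi> \<nu>) z)) *\<^sub>R \<xi> \<mu>)
          \<le> 2 * (\<beta> * norm (x - z)) / exp (- (\<beta> / 2))"
    using assms near
    by (intro norm_normalized_weights_diff_le_uniform)
      (auto intro: gauss_weight_lower_bound gauss_weight_lipschitz gauss_weight_pos)
  also have "\<dots> = 2 * \<beta> * exp (\<beta> / 2) * norm (x - z)"
    by (simp add: exp_minus field_simps)
  finally show ?thesis .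
qed

theorem lemma2:
  fixes \<xi> :: "nat \<Rightarrow> real ^ 'n" and K :: nat and \<beta> :: real and x z :: "real ^ 'n"
  assumes "\<forall>\<mu>\<in>{1..K}. \<xi> \<mu> \<in> hcube"
    and "\<beta> > 0"
    and "x \<in> hcube" and "z \<in> hcube"
  shows "norm (gradE \<beta> K \<xi> x - gradE \<beta> K \<xi> z)
           \<le> (1 + 2 * real K * \<beta> * exp (\<beta> / 2)) * norm (x - z)"
proof -
  define R where "R = (\<Sum>\<mu>=1..K. (gauss_weight \<beta> (\<xi> \<mu>) x / (\<Sum>\<nu>=1..K. gauss_weight \<beta> (\<xi> \<nu>) x)
                      - gauss_weight \<beta> (\<xi> \<mu>) z / (\<Sum>\<nu>=1..K. gauss_weight \<beta> (\<xi> \<nu>) z)) *\<^sub>R \<xi> \<mu>)"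
  have "gradE \<beta> K \<xi> x - gradE \<beta> K \<xi> z = (x - z) - R"
    by (simp add: gradE_eq_gauss_weight R_def sum_subtractf scaleR_diff_left)
  then have "norm (gradE \<beta> K \<xi> x - gradE \<beta> K \<xi> z) \<le> norm (x - z) + norm R"
    by (simp add: norm_triangle_ineq4)
  moreover have "norm R \<le> 2 * real K * \<beta> * exp (\<beta> / 2) * norm (x - z)"
  proof (cases "K = 0")
    case True
    then show ?thesis
      by (simp add: R_def)
  next
    case False
    then have "norm R \<le> 2 * \<beta> * exp (\<beta> / 2) * norm (x - z)"
      unfolding R_def using assms by (intro norm_gauss_softmax_diff_le) auto
    also have "\<dots> \<le> 2 * real K * \<beta> * exp (\<beta> / 2) * norm (x - z)"
      using False assms(2) by (simp add: mult_le_cancel_right1 mult_right_mono)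
    finally show ?thesis .
  qed
  ultimately show ?thesis
    by (simp add: algebra_simps)
qed

end
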